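(* Let $T>0$ and let $\Sigma=(\mathcal X,\mathcal Y,M_U,M_D,\phi,\pi,H)$ be a $T$-periodic control system with outputs. If $\Sigma$ satisfies the IOS property from the input $u\in M_U$, then $\Sigma$ satisfies the UIOS property from the input $u\in M_U$.
   Context: Notation: $\mathbb R^+=[0,\infty)$. $K^+$: positive continuous functions on $\mathbb R^+$. $\mathcal N$: continuous non-decreasing $\rho:\mathbb R^+\to\mathbb R^+$ with $\rho(0)=0$. $K$: positive definite, increasing, continuous functions $\mathbb R^+\to\mathbb R^+$. $KL$: continuous $\sigma:\mathbb R^+\times\mathbb R^+\to\mathbb R^+$ with $\sigma(\cdot,t)\in K$ for each $t$ and $\sigma(s,\cdot)$ non-increasing tending to $0$. For a subset $U$ of a normed linear space $\mathcal U$ with $0\in U$, $\mathcal M(U)$ is the set of locally bounded $u:\mathbb R^+\to U$, $u_0$ the zero input, $B_U[0,r]=\{v\in U:\|v\|_{\mathcal U}\le r\}$. Control system with outputs $\Sigma=(\mathcal X,\mathcal Y,M_U,M_D,\phi,\pi,H)$: a set $U\subseteq\mathcal U$ ($0\in U$) and $M_U\subseteq\mathcal M(U)$ containing $u_0$; a set $D$ and $M_D\subseteq\mathcal M(D)$; normed linear spaces $\mathcal X,\mathcal Y$; a continuous $H:\mathbb R^+\times\mathcal X\times U\to\mathcal Y$ mapping bounded sets into bounded sets; a set-valued map $(t_0,x_0,u,d)\mapsto\pi(t_0,x_0,u,d)\subseteq[t_0,\infty)$ with $t_0\in\pi(t_0,x_0,u,d)$; a map $\phi:A_\phi\to\mathcal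 X$, $A_\phi\subseteq\mathbb R^+\times\mathbb R^+\times\mathcal X\times M_U\times M_D$, with: (1) for each $(t_0,x_0,u,d)$ some $t>t_0$ has $[t_0,t]\times\{(t_0,x_0,u,d)\}\subseteq A_\phi$; (2) $\phi(t_0,t_0,x_0,u,d)=x_0$; (3) causality: if $(t,t_0,x_0,u,d)\in A_\phi$, $t>t_0$, and $(\tilde u,\tilde d)$ agrees with $(u,d)$ on $[t_0,t]$, then $(t,t_0,x_0,\tilde u,\tilde d)\in A_\phi$ with the same value of $\phi$; (4) weak semigroup property: there is $r>0$ such that for each $t\ge t_0$ with $(t,t_0,x_0,u,d)\in A_\phi$: (a) $(\tau,t_0,x_0,u,d)\in A_\phi$ for $\tau\in[t_0,t]$; (b) $\phi(t,\tau,\phi(\tau,t_0,x_0,u,d),u,d)=\phi(t,t_0,x_0,u,d)$ for $\tau\in[t_0,t]\cap\pi(t_0,x_0,u,d)$; (c) if $(t+r,t_0,x_0,u,d)\in A_\phi$ then $\pi(t_0,x_0,u,d)\cap[t,t+r]\ne\emptyset$; (d) for $\tau\in\pi(t_0,x_0,u,d)$ with $(\tau,t_0,x_0,u,d)\in A_\phi$, $\pi(\tau,\phi(\tau,t_0,x_0,u,d),u,d)=\pi(t_0,x_0,u,d)\cap[\tau,\infty)$. $T$-periodic: (a) $H(t+T,x,u)=H(t,x,u)$ for all $(t,x,u)$; (b) for every $(u,d)\in M_U\times M_D$ and integer $k$ there are $P_{kT}u\in M_U$, $P_{kT}d\in M_D$ with $(P_{kT}u)(t)=u(t+kT)$, $(P_{kT}d)(t)=d(t+kT)$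 for all $t+kT\ge0$; (c) for each $(t,t_0,x_0,u,d)\in A_\phi$ with $t\ge t_0$ and each integer $k$ with $t_0-kT\ge0$: $(t-kT,t_0-kT,x_0,P_{kT}u,P_{kT}d)\in A_\phi$, $\pi(t_0-kT,x_0,P_{kT}u,P_{kT}d)=\{\tau-kT:\tau\in\pi(t_0,x_0,u,d)\}$ and $\phi(t,t_0,x_0,u,d)=\phi(t-kT,t_0-kT,x_0,P_{kT}u,P_{kT}d)$. BIC property: for each $(t_0,x_0,u,d)$ there is $t_{\max}\in(t_0,+\infty]$ with $A_\phi=\bigcup[t_0,t_{\max})\times\{(t_0,x_0,u,d)\}$, and if $t_{\max}<\infty$ then $\phi(\cdot,t_0,x_0,u,d)$ is unbounded on $[t_0,t_{\max})$. RFC from the input $u$: BIC and for all $r,T'\ge0$, $\sup\{\|\phi(t_0+s,t_0,x_0,u,d)\|_{\mathcal X}: u\in\mathcal M(B_U[0,r])\cap M_U, s\in[0,T'],\|x_0\|_{\mathcal X}\le r,t_0\in[0,T'],d\in M_D\}<\infty$. Robust equilibrium point from the input $u$: $H(t,0,0)=0$; $\phi(t,t_0,0,u_0,d)=0$ for all $t\ge t_0$, $d$; and for all $\varepsilon>0$, $T',h\ge0$ there is $\eta>0$ such that $\|x\|+\sup_t\|u(t)\|<\eta$, $t_0\in[0,T']$, $\tau\in[t_0,t_0+h]$, $d\in M_D$ imply $(\tau,t_0,x,u,d)\in A_\phi$ and $\|\phi(\tau,t_0,x,u,d)\|<\varepsilon$. IOS from the input $u\in M_U$: $\Sigma$ has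 BIC, is RFC from $u$, $0$ is a robust equilibrium point from $u$, and there exist $\sigma\in KL$, $\beta\in K^+$, $\gamma\in\mathcal N$ with $\|H(t,\phi(t,t_0,x_0,u,d),u(t))\|_{\mathcal Y}\le\sigma(\beta(t_0)\|x_0\|_{\mathcal X},t-t_0)+\sup_{t_0\le\tau\le t}\gamma(\|u(\tau)\|_{\mathcal U})$ for all $u\in M_U$, $(t_0,x_0,d)$, $t\ge t_0$. UIOS: the same with $\beta\equiv1$. *)

theory Defs
  imports "HOL-Analysis.Analysis"
begin

(* Time is modelled by real; only values on R+ = {0..} matter.
   Inputs u : R+ -> U and disturbances d : R+ -> D are functions real => _ ;
   all conditions on them are imposed for t >= 0 only. *)

type_synonym ('x,'u,'d) tuple = "real \<times> real \<times> 'x \<times> (real \<Rightarrow> 'u) \<times> (real \<Rightarrow> 'd)"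

definition classK_plus :: "(real \<Rightarrow> real) \<Rightarrow> bool" where
  "classK_plus \<beta> \<longleftrightarrow> continuous_on {0..} \<beta> \<and> (\<forall>t\<ge>0. \<beta> t > 0)"

definition classN :: "(real \<Rightarrow> real) \<Rightarrow> bool" where
  "classN \<rho> \<longleftrightarrow> continuous_on {0..} \<rho> \<and> mono_on {0..} \<rho> \<and> \<rho> 0 = 0 \<and> (\<forall>s\<ge>0. \<rho> s \<ge> 0)"

definition classK :: "(real \<Rightarrow> real) \<Rightarrow> bool" where
  "classK \<rho> \<longleftrightarrow> continuous_on {0..} \<rho> \<and> strict_mono_on {0..} \<rho> \<and> \<rho> 0 = 0
     \<and> (\<forall>s>0. \<rho> s > 0)"

definition classKL :: "(real \<Rightarrow> real \<Rightarrow> real) \<Rightarrow> bool" where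
  "classKL \<sigma> \<longleftrightarrow> continuous_on ({0..} \<times> {0..}) (\<lambda>p. \<sigma> (fst p) (snd p))
     \<and> (\<forall>t\<ge>0. classK (\<lambda>s. \<sigma> s t))
     \<and> (\<forall>s\<ge>0. antimono_on {0..} (\<lambda>t. \<sigma> s t) \<and> ((\<lambda>t. \<sigma> s t) \<longlongrightarrow> 0) at_top)"

definition Mset :: "'u::real_normed_vector set \<Rightarrow> (real \<Rightarrow> 'u) set" where
  "Mset U = {u. (\<forall>t\<ge>0. u t \<in> U) \<and> (\<forall>S\<ge>0. \<exists>M. \<forall>t\<in>{0..S}. norm (u t) \<le> M)}"

(* M(D) for the bare set D: functions R+ -> D (no norm available on D) *)
definition MsetD :: "'d set \<Rightarrow> (real \<Rightarrow> 'd) set" where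
  "MsetD D = {d. \<forall>t\<ge>0. d t \<in> D}"

definition agree_on :: "real set \<Rightarrow> (real \<Rightarrow> 'a) \<Rightarrow> (real \<Rightarrow> 'a) \<Rightarrow> bool" where
  "agree_on S f g \<longleftrightarrow> (\<forall>t\<in>S. f t = g t)"

(* Control system with outputs (X, Y, M_U, M_D, phi, pi, H); X = UNIV::'x, Y = UNIV::'y,
   A is the domain A_phi. *)
definition control_system ::
  "'u::real_normed_vector set \<Rightarrow> (real \<Rightarrow> 'u) set \<Rightarrow> 'd set \<Rightarrow> (real \<Rightarrow> 'd) set
   \<Rightarrow> (real \<Rightarrow> 'x::real_normed_vector \<Rightarrow> 'u \<Rightarrow> 'y::real_normed_vector)
   \<Rightarrow> (real \<Rightarrow> 'x \<Rightarrow> (real \<Rightarrow> 'u) \<Rightarrow> (real \<Rightarrow> 'd) \<Rightarrow> real set)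
   \<Rightarrow> (real \<Rightarrow> real \<Rightarrow> 'x \<Rightarrow> (real \<Rightarrow> 'u) \<Rightarrow> (real \<Rightarrow> 'd) \<Rightarrow> 'x)
   \<Rightarrow> ('x,'u,'d) tuple set \<Rightarrow> bool" where
  "control_system U MU D MD H \<pi> \<phi> A \<longleftrightarrow>
     0 \<in> U \<and> MU \<subseteq> Mset U \<and> (\<lambda>t. 0) \<in> MU \<and> MD \<subseteq> MsetD D
   \<and> continuous_on (({0..} \<times> UNIV) \<times> U) (\<lambda>p. H (fst (fst p)) (snd (fst p)) (snd p))
   \<and> (\<forall>r. \<exists>M. \<forall>t x v. 0 \<le> t \<and> t \<le> r \<and> norm x \<le> r \<and> v \<in> U \<and> norm v \<le> r
          \<longrightarrow> norm (H t x v) \<le> M)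
   \<and> (\<forall>t0 x0 u d. t0 \<ge> 0 \<and> u \<in> MU \<and> d \<in> MD \<longrightarrow>
          t0 \<in> \<pi> t0 x0 u d \<and> \<pi> t0 x0 u d \<subseteq> {t0..})
   \<and> A \<subseteq> {(t, t0, x0, u, d). t \<ge> 0 \<and> t0 \<ge> 0 \<and> u \<in> MU \<and> d \<in> MD}
   \<and> (\<forall>t0 x0 u d. t0 \<ge> 0 \<and> u \<in> MU \<and> d \<in> MD \<longrightarrow>
          (\<exists>t>t0. \<forall>\<tau>\<in>{t0..t}. (\<tau>, t0, x0, u, d) \<in> A))
   \<and> (\<forall>t0 x0 u d. t0 \<ge> 0 \<and> u \<in> MU \<and> d \<in> MD \<longrightarrow> \<phi> t0 t0 x0 u d = x0)
   \<and> (\<forall>t t0 x0 u d u' d'. (t, t0, x0, u, d) \<in> A \<and> t > t0 \<and> u' \<in> MU \<and> d' \<in> MD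
          \<and> agree_on {t0..t} u u' \<and> agree_on {t0..t} d d' \<longrightarrow>
          (t, t0, x0, u', d') \<in> A \<and> \<phi> t t0 x0 u' d' = \<phi> t t0 x0 u d)
   \<and> (\<exists>r>0. \<forall>t t0 x0 u d. (t, t0, x0, u, d) \<in> A \<and> t \<ge> t0 \<longrightarrow>
          (\<forall>\<tau>\<in>{t0..t}. (\<tau>, t0, x0, u, d) \<in> A)
        \<and> (\<forall>\<tau>\<in>{t0..t} \<inter> \<pi> t0 x0 u d. \<phi> t \<tau> (\<phi> \<tau> t0 x0 u d) u d = \<phi> t t0 x0 u d)
        \<and> ((t + r, t0, x0, u, d) \<in> A \<longrightarrow> \<pi> t0 x0 u d \<inter> {t..t+r} \<noteq> {})
        \<and> (\<forall>\<tau>\<in>\<pi> t0 x0 u d. (\<tau>, t0, x0, u, d) \<in> A \<longrightarrow>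
              \<pi> \<tau> (\<phi> \<tau> t0 x0 u d) u d = \<pi> t0 x0 u d \<inter> {\<tau>..}))"

(* T-periodicity; PU k u and PD k d stand for P_{kT} u and P_{kT} d *)
definition T_periodic ::
  "real \<Rightarrow> (real \<Rightarrow> 'u::real_normed_vector) set \<Rightarrow> (real \<Rightarrow> 'd) set
   \<Rightarrow> (real \<Rightarrow> 'x::real_normed_vector \<Rightarrow> 'u \<Rightarrow> 'y::real_normed_vector)
   \<Rightarrow> (real \<Rightarrow> 'x \<Rightarrow> (real \<Rightarrow> 'u) \<Rightarrow> (real \<Rightarrow> 'd) \<Rightarrow> real set)
   \<Rightarrow> (real \<Rightarrow> real \<Rightarrow> 'x \<Rightarrow> (real \<Rightarrow> 'u) \<Rightarrow> (real \<Rightarrow> 'd) \<Rightarrow> 'x)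
   \<Rightarrow> ('x,'u,'d) tuple set \<Rightarrow> bool" where
  "T_periodic T MU MD H \<pi> \<phi> A \<longleftrightarrow>
     (\<forall>t x v. t \<ge> 0 \<longrightarrow> H (t + T) x v = H t x v)
   \<and> (\<exists>PU PD. (\<forall>u\<in>MU. \<forall>k::int. PU k u \<in> MU \<and> (\<forall>t\<ge>0. t + k * T \<ge> 0 \<longrightarrow> PU k u t = u (t + k * T)))
     \<and> (\<forall>d\<in>MD. \<forall>k::int. PD k d \<in> MD \<and> (\<forall>t\<ge>0. t + k * T \<ge> 0 \<longrightarrow> PD k d t = d (t + k * T)))
     \<and> (\<forall>t t0 x0 u d. \<forall>k::int. (t, t0, x0, u, d) \<in> A \<and> t \<ge> t0 \<and> t0 - k * T \<ge> 0 \<longrightarrow>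
          (t - k * T, t0 - k * T, x0, PU k u, PD k d) \<in> A
        \<and> \<pi> (t0 - k * T) x0 (PU k u) (PD k d) = (\<lambda>\<tau>. \<tau> - k * T) ` \<pi> t0 x0 u d
        \<and> \<phi> t t0 x0 u d = \<phi> (t - k * T) (t0 - k * T) x0 (PU k u) (PD k d)))"

definition BIC :: "(real \<Rightarrow> 'u::real_normed_vector) set \<Rightarrow> (real \<Rightarrow> 'd) set
   \<Rightarrow> (real \<Rightarrow> real \<Rightarrow> 'x::real_normed_vector \<Rightarrow> (real \<Rightarrow> 'u) \<Rightarrow> (real \<Rightarrow> 'd) \<Rightarrow> 'x)
   \<Rightarrow> ('x,'u,'d) tuple set \<Rightarrow> bool" where
  "BIC MU MD \<phi> A \<longleftrightarrow>
     (\<forall>t0 x0 u d. t0 \<ge> 0 \<and> u \<in> MU \<and> d \<in> MD \<longrightarrow>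
        (\<exists>tmax::ereal. ereal t0 < tmax
          \<and> (\<forall>t. (t, t0, x0, u, d) \<in> A \<longleftrightarrow> t0 \<le> t \<and> ereal t < tmax)
          \<and> (tmax \<noteq> \<infinity> \<longrightarrow>
               \<not> bounded ((\<lambda>t. \<phi> t t0 x0 u d) ` {t0..<real_of_ereal tmax}))))"

definition RFC :: "'u::real_normed_vector set \<Rightarrow> (real \<Rightarrow> 'u) set \<Rightarrow> (real \<Rightarrow> 'd) set
   \<Rightarrow> (real \<Rightarrow> real \<Rightarrow> 'x::real_normed_vector \<Rightarrow> (real \<Rightarrow> 'u) \<Rightarrow> (real \<Rightarrow> 'd) \<Rightarrow> 'x)
   \<Rightarrow> ('x,'u,'d) tuple set \<Rightarrow> bool" where
  "RFC U MU MD \<phi> A \<longleftrightarrow> BIC MU MD \<phi> A \<and>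
     (\<forall>r\<ge>0. \<forall>T'\<ge>0. \<exists>M. \<forall>u s x0 t0 d.
        u \<in> MU \<and> (\<forall>t\<ge>0. norm (u t) \<le> r) \<and> 0 \<le> s \<and> s \<le> T' \<and> norm x0 \<le> r
        \<and> 0 \<le> t0 \<and> t0 \<le> T' \<and> d \<in> MD \<and> (t0 + s, t0, x0, u, d) \<in> A
        \<longrightarrow> norm (\<phi> (t0 + s) t0 x0 u d) \<le> M)"

definition robust_eq :: "(real \<Rightarrow> 'u::real_normed_vector) set \<Rightarrow> (real \<Rightarrow> 'd) set
   \<Rightarrow> (real \<Rightarrow> 'x::real_normed_vector \<Rightarrow> 'u \<Rightarrow> 'y::real_normed_vector)
   \<Rightarrow> (real \<Rightarrow> real \<Rightarrow> 'x \<Rightarrow> (real \<Rightarrow> 'u) \<Rightarrow> (real \<Rightarrow> 'd) \<Rightarrow> 'x)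
   \<Rightarrow> ('x,'u,'d) tuple set \<Rightarrow> bool" where
  "robust_eq MU MD H \<phi> A \<longleftrightarrow>
     (\<forall>t\<ge>0. H t 0 0 = 0)
   \<and> (\<forall>t t0 d. 0 \<le> t0 \<and> t0 \<le> t \<and> d \<in> MD \<longrightarrow>
        (t, t0, 0, (\<lambda>_. 0), d) \<in> A \<and> \<phi> t t0 0 (\<lambda>_. 0) d = 0)
   \<and> (\<forall>\<epsilon>>0. \<forall>T'\<ge>0. \<forall>h\<ge>0. \<exists>\<eta>>0. \<forall>x u t0 \<tau> d.
        u \<in> MU \<and> (\<exists>c. (\<forall>t\<ge>0. norm (u t) \<le> c) \<and> norm x + c < \<eta>)
        \<and> 0 \<le> t0 \<and> t0 \<le> T' \<and> t0 \<le> \<tau> \<and> \<tau> \<le> t0 + h \<and> d \<in> MD \<longrightarrow>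
        (\<tau>, t0, x, u, d) \<in> A \<and> norm (\<phi> \<tau> t0 x u d) < \<epsilon>)"

definition IOS_bound :: "(real \<Rightarrow> 'u::real_normed_vector) set \<Rightarrow> (real \<Rightarrow> 'd) set
   \<Rightarrow> (real \<Rightarrow> 'x::real_normed_vector \<Rightarrow> 'u \<Rightarrow> 'y::real_normed_vector)
   \<Rightarrow> (real \<Rightarrow> real \<Rightarrow> 'x \<Rightarrow> (real \<Rightarrow> 'u) \<Rightarrow> (real \<Rightarrow> 'd) \<Rightarrow> 'x)
   \<Rightarrow> ('x,'u,'d) tuple set
   \<Rightarrow> (real \<Rightarrow> real \<Rightarrow> real) \<Rightarrow> (real \<Rightarrow> real) \<Rightarrow> (real \<Rightarrow> real) \<Rightarrow> bool" where
  "IOS_bound MU MD H \<phi> A \<sigma> \<beta> \<gamma> \<longleftrightarrow>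
     (\<forall>u t0 x0 d t. u \<in> MU \<and> d \<in> MD \<and> 0 \<le> t0 \<and> t0 \<le> t \<and> (t, t0, x0, u, d) \<in> A \<longrightarrow>
        norm (H t (\<phi> t t0 x0 u d) (u t))
          \<le> \<sigma> (\<beta> t0 * norm x0) (t - t0) + (SUP \<tau>\<in>{t0..t}. \<gamma> (norm (u \<tau>))))"

definition IOS where
  "IOS U MU MD H \<phi> A \<longleftrightarrow> BIC MU MD \<phi> A \<and> RFC U MU MD \<phi> A \<and> robust_eq MU MD H \<phi> A
     \<and> (\<exists>\<sigma> \<beta> \<gamma>. classKL \<sigma> \<and> classK_plus \<beta> \<and> classN \<gamma> \<and> IOS_bound MU MD H \<phi> A \<sigma> \<beta> \<gamma>)"

definition UIOS where
  "UIOS U MU MD H \<phi> A \<longleftrightarrow> BIC MU MD \<phi> A \<and> RFC U MU MD \<phi> A \<and> robust_eq MU MD H \<phi> A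
     \<and> (\<exists>\<sigma> \<gamma>. classKL \<sigma> \<and> classN \<gamma> \<and> IOS_bound MU MD H \<phi> A \<sigma> (\<lambda>_. 1) \<gamma>)"

end

theory Submission
  imports Defs
begin

(*
  Write t0 = s + k T with s in [0, T]. Periodicity shifts the trajectory starting at t0 to
  one starting at s with the same outputs and the same input values, so the IOS estimate
  holds at t0 with beta (s) in place of beta (t0). Since beta is continuous, it is bounded by
  some b on the compact period [0, T], and sigma (b s, t) is a KL function giving the uniform
  estimate.
*)

lemma periodic_on_nonneg_shift:
  fixes f :: "real \<Rightarrow> 'a" and T t :: real and k :: int
  assumes per: "\<And>t. t \<ge> 0 \<Longrightarrow> f (t + T) = f t"
    and "T \<ge> 0" "t \<ge> 0" "t + k * T \<ge> 0"
  shows "f (t + k * T) = f t"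
proof -
  have nat_shift: "f (y + real n * T) = f y" if "y \<ge> 0" for y n
  proof (induction n)
    case (Suc n)
    have "y + real (Suc n) * T = (y + real n * T) + T" by (simp add: algebra_simps)
    then show ?case
      using per[of "y + real n * T"] Suc \<open>T \<ge> 0\<close> \<open>y \<ge> 0\<close> by (simp add: add.assoc)
  qed simp
  show ?thesis
  proof (cases "k \<ge> 0")
    case True
    then show ?thesis using nat_shift[of t "nat k"] \<open>t \<ge> 0\<close> by simp
  next
    case False
    then show ?thesis using nat_shift[of "t + k * T" "nat (- k)"] assms(4) by simp
  qed
qed

lemma SUP_atLeastAtMost_shift:
  fixes a b c :: real
  shows "(SUP \<tau>\<in>{a..b}. f (\<tau> + c)) = (SUP \<tau>\<in>{a + c..b + c}. f \<tau>)"
proof -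
  have "(\<lambda>\<tau>. \<tau> + c) ` {a..b} = {a + c..b + c}"
    using image_add_atLeastAtMost'[of c a b] by (simp add: add.commute)
  then show ?thesis by (metis image_image)
qed

lemma classK_mono:
  assumes "classK \<rho>" "0 \<le> a" "a \<le> b"
  shows "\<rho> a \<le> \<rho> b"
  using assms strict_mono_on_leD[of "{0..}" \<rho> a b] unfolding classK_def by simp

lemma classK_scale:
  assumes "classK \<rho>" "c > 0"
  shows "classK (\<lambda>s. \<rho> (c * s))"
proof -
  have "continuous_on {0..} (\<rho> \<circ> (\<lambda>s. c * s))"
    using assms unfolding classK_def
    by (intro continuous_on_compose continuous_intros)
       (auto intro: continuous_on_subset simp: zero_le_mult_iff)
  then show ?thesis
    using assms unfolding classK_def strict_mono_on_def
    by (auto simp: o_def mult_strict_left_mono)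
qed

lemma classKL_scale:
  assumes "classKL \<sigma>" "c > 0"
  shows "classKL (\<lambda>s t. \<sigma> (c * s) t)"
proof -
  have "continuous_on ({0..} \<times> {0..})
      ((\<lambda>p. \<sigma> (fst p) (snd p)) \<circ> (\<lambda>p. (c * fst p, snd p)))"
    using assms unfolding classKL_def
    by (intro continuous_on_compose continuous_intros)
       (auto intro: continuous_on_subset simp: zero_le_mult_iff)
  then show ?thesis
    using assms classK_scale unfolding classKL_def by (auto simp: o_def)
qed

lemma classK_plus_bounded_on_interval:
  assumes "classK_plus \<beta>" "0 \<le> T"
  obtains b where "b > 0" "\<And>s. s \<in> {0..T} \<Longrightarrow> \<beta> s \<le> b"
proof -
  have "continuous_on {0..T} \<beta>"
    using assms unfolding classK_plus_def by (auto intro: continuous_on_subset)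
  then obtain m where "m \<in> {0..T}" "\<forall>s\<in>{0..T}. \<beta> s \<le> \<beta> m"
    using continuous_attains_sup[of "{0..T}" \<beta>] assms(2) by auto
  moreover have "\<beta> m > 0" using assms(1) \<open>m \<in> {0..T}\<close> unfolding classK_plus_def by simp
  ultimately show ?thesis using that by blast
qed

lemma floor_divide_remainder:
  fixes t T :: real
  assumes "T > 0"
  shows "t - \<lfloor>t / T\<rfloor> * T \<in> {0..T}"
  using floor_divide_lower[OF assms, of t] floor_divide_upper[OF assms, of t]
  by (simp add: algebra_simps)

lemma IOS_boundD:
  assumes "IOS_bound MU MD H \<phi> A \<sigma> \<beta> \<gamma>" "u \<in> MU" "d \<in> MD" "0 \<le> t0" "t0 \<le> t"
    "(t, t0, x0, u, d) \<in> A"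
  shows "norm (H t (\<phi> t t0 x0 u d) (u t))
    \<le> \<sigma> (\<beta> t0 * norm x0) (t - t0) + (SUP \<tau>\<in>{t0..t}. \<gamma> (norm (u \<tau>)))"
  using assms unfolding IOS_bound_def by blast

lemma T_periodic_trajectory_shift:
  fixes T t0 t :: real and k :: int
  assumes "T_periodic T MU MD H \<pi> \<phi> A" "u \<in> MU" "d \<in> MD" "(t, t0, x0, u, d) \<in> A" "t0 \<le> t"
    "0 \<le> t0 - k * T"
  obtains u' d' where "u' \<in> MU" "d' \<in> MD"
    "\<And>\<tau>. 0 \<le> \<tau> \<Longrightarrow> 0 \<le> \<tau> + k * T \<Longrightarrow> u' \<tau> = u (\<tau> + k * T)"
    "(t - k * T, t0 - k * T, x0, u', d') \<in> A"
    "\<phi> t t0 x0 u d = \<phi> (t - k * T) (t0 - k * T) x0 u' d'"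
  using assms(1) unfolding T_periodic_def
  apply (elim conjE exE)
  subgoal premises prems for PU PD
    using prems(3)[rule_format, OF assms(2), of k] prems(4)[rule_format, OF assms(3), of k]
      prems(5)[rule_format, of t t0 x0 u d k] assms(4-6)
    by (intro that[of "PU (real_of_int k) u" "PD (real_of_int k) d"]) auto
  done

lemma T_periodic_output_shift:
  fixes T t :: real and k :: int
  assumes "T_periodic T MU MD H \<pi> \<phi> A" "0 \<le> T" "0 \<le> t" "0 \<le> t + k * T"
  shows "H (t + k * T) x v = H t x v"
proof -
  have "\<And>\<tau>. \<tau> \<ge> 0 \<Longrightarrow> H (\<tau> + T) x v = H \<tau> x v"
    using assms(1) unfolding T_periodic_def by blast
  from periodic_on_nonneg_shift[where f = "\<lambda>\<tau>. H \<tau> x v", OF this assms(2-4)] show ?thesis .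
qed

lemma T_periodic_IOS_bound_shift:
  fixes T t0 t :: real and k :: int
  assumes per: "T_periodic T MU MD H \<pi> \<phi> A" and "0 \<le> T"
    and ios: "IOS_bound MU MD H \<phi> A \<sigma> \<beta> \<gamma>"
    and u: "u \<in> MU" and d: "d \<in> MD"
    and t0: "0 \<le> t0" "0 \<le> t0 - k * T" "t0 \<le> t" and traj: "(t, t0, x0, u, d) \<in> A"
  shows "norm (H t (\<phi> t t0 x0 u d) (u t))
    \<le> \<sigma> (\<beta> (t0 - k * T) * norm x0) (t - t0) + (SUP \<tau>\<in>{t0..t}. \<gamma> (norm (u \<tau>)))"
proof -
  obtain u' d' where
    u': "u' \<in> MU" "\<And>\<tau>. 0 \<le> \<tau> \<Longrightarrow> 0 \<le> \<tau> + k * T \<Longrightarrow> u' \<tau> = u (\<tau> + k * T)"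
    and d': "d' \<in> MD" and traj': "(t - k * T, t0 - k * T, x0, u', d') \<in> A"
    and \<phi>_eq: "\<phi> t t0 x0 u d = \<phi> (t - k * T) (t0 - k * T) x0 u' d'"
    using T_periodic_trajectory_shift[OF per u d traj t0(3,2)] by blast
  have H_eq: "H (t - k * T) x v = H t x v" for x v
    using T_periodic_output_shift[OF per \<open>0 \<le> T\<close>, of "t - k * T" k] t0 by simp
  have "(SUP \<tau>\<in>{t0 - k * T..t - k * T}. \<gamma> (norm (u' \<tau>)))
      = (SUP \<tau>\<in>{t0 - k * T..t - k * T}. \<gamma> (norm (u (\<tau> + k * T))))"
    using u'(2) t0 by (intro SUP_cong) auto
  also have "\<dots> = (SUP \<tau>\<in>{t0..t}. \<gamma> (norm (u \<tau>)))"
    using SUP_atLeastAtMost_shift[where f = "\<lambda>\<tau>. \<gamma> (norm (u \<tau>))" and c = "real_of_int k * T"]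
    by simp
  finally have SUP_eq: "(SUP \<tau>\<in>{t0 - k * T..t - k * T}. \<gamma> (norm (u' \<tau>)))
      = (SUP \<tau>\<in>{t0..t}. \<gamma> (norm (u \<tau>)))" .
  have u_eq: "u' (t - k * T) = u t" using u'(2)[of "t - k * T"] t0 by simp
  show ?thesis
    using IOS_boundD[OF ios u'(1) d' t0(2) _ traj'] t0(3)
    by (simp add: H_eq SUP_eq u_eq \<phi>_eq)
qed

lemma T_periodic_IOS_bound_uniform:
  assumes "T > 0" and per: "T_periodic T MU MD H \<pi> \<phi> A"
    and \<sigma>: "classKL \<sigma>" and \<beta>: "classK_plus \<beta>" and b: "\<And>s. s \<in> {0..T} \<Longrightarrow> \<beta> s \<le> b"
    and ios: "IOS_bound MU MD H \<phi> A \<sigma> \<beta> \<gamma>"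
  shows "IOS_bound MU MD H \<phi> A (\<lambda>s t. \<sigma> (b * s) t) (\<lambda>_. 1) \<gamma>"
  unfolding IOS_bound_def
proof (intro allI impI, elim conjE)
  fix u t0 x0 d t
  assume u: "u \<in> MU" and d: "d \<in> MD" and t0: "0 \<le> t0" "t0 \<le> t"
    and traj: "(t, t0, x0, u, d) \<in> A"
  define s where "s = t0 - \<lfloor>t0 / T\<rfloor> * T"
  have s: "s \<in> {0..T}" unfolding s_def using floor_divide_remainder[OF \<open>T > 0\<close>] .
  have "norm (H t (\<phi> t t0 x0 u d) (u t))
      \<le> \<sigma> (\<beta> s * norm x0) (t - t0) + (SUP \<tau>\<in>{t0..t}. \<gamma> (norm (u \<tau>)))"
    using T_periodic_IOS_bound_shift[OF per _ ios u d t0(1) _ t0(2) traj, of "\<lfloor>t0 / T\<rfloor>"]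
      s \<open>T > 0\<close>
    unfolding s_def by simp
  also have "\<sigma> (\<beta> s * norm x0) (t - t0) \<le> \<sigma> (b * norm x0) (t - t0)"
  proof (rule classK_mono[where \<rho> = "\<lambda>r. \<sigma> r (t - t0)"])
    show "classK (\<lambda>r. \<sigma> r (t - t0))" using \<sigma> t0 unfolding classKL_def by simp
    show "0 \<le> \<beta> s * norm x0" using \<beta> s unfolding classK_plus_def by (simp add: less_imp_le)
    show "\<beta> s * norm x0 \<le> b * norm x0" using b[OF s] by (simp add: mult_right_mono)
  qed
  finally show "norm (H t (\<phi> t t0 x0 u d) (u t))
      \<le> \<sigma> (b * (1 * norm x0)) (t - t0) + (SUP \<tau>\<in>{t0..t}. \<gamma> (norm (u \<tau>)))"
    by simp
qed

theorem lemma2p19: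
  fixes T :: real
    and U :: "'u::real_normed_vector set" and MU :: "(real \<Rightarrow> 'u) set"
    and D :: "'d set" and MD :: "(real \<Rightarrow> 'd) set"
    and H :: "real \<Rightarrow> 'x::real_normed_vector \<Rightarrow> 'u \<Rightarrow> 'y::real_normed_vector"
    and \<pi> :: "real \<Rightarrow> 'x \<Rightarrow> (real \<Rightarrow> 'u) \<Rightarrow> (real \<Rightarrow> 'd) \<Rightarrow> real set"
    and \<phi> :: "real \<Rightarrow> real \<Rightarrow> 'x \<Rightarrow> (real \<Rightarrow> 'u) \<Rightarrow> (real \<Rightarrow> 'd) \<Rightarrow> 'x"
    and A :: "('x,'u,'d) tuple set"
  assumes "T > 0"
    and "control_system U MU D MD H \<pi> \<phi> A"
    and "T_periodic T MU MD H \<pi> \<phi> A"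
    and "IOS U MU MD H \<phi> A"
  shows "UIOS U MU MD H \<phi> A"
proof -
  obtain \<sigma> \<beta> \<gamma> where \<sigma>: "classKL \<sigma>" and \<beta>: "classK_plus \<beta>" and \<gamma>: "classN \<gamma>"
    and ios: "IOS_bound MU MD H \<phi> A \<sigma> \<beta> \<gamma>"
    and props: "BIC MU MD \<phi> A" "RFC U MU MD \<phi> A" "robust_eq MU MD H \<phi> A"
    using assms(4) unfolding IOS_def by blast
  obtain b where "b > 0" and b: "\<And>s. s \<in> {0..T} \<Longrightarrow> \<beta> s \<le> b"
    using classK_plus_bounded_on_interval[OF \<beta> less_imp_le[OF \<open>T > 0\<close>]] by blast
  have "IOS_bound MU MD H \<phi> A (\<lambda>s t. \<sigma> (b * s) t) (\<lambda>_. 1) \<gamma>"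
    using T_periodic_IOS_bound_uniform[OF \<open>T > 0\<close> assms(3) \<sigma> \<beta> b ios] .
  then show ?thesis
    unfolding UIOS_def using props \<gamma> classKL_scale[OF \<sigma> \<open>b > 0\<close>] by blast
qed

end
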